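(* Let $F$ be Thompson's group with the infinite presentation $\langle x_0,x_1,x_2,\ldots \mid x_i^{-1}x_nx_i=x_{n+1} \text{ for all } i<n\rangle$, and let $w\in F$. Let $\alpha$ be the unique normal form of $w$. Then $\alpha$ is a geodesic representative of $w$ with respect to the word metric on $F$ given by the infinite generating set $\{x_0,x_1,x_2,\ldots\}$; that is, no word in the letters $x_i^{\pm1}$ representing $w$ is shorter than $\alpha$.
   Context: Every element of $F$ can be written in normal form $x_{a_1}^{r_1}x_{a_2}^{r_2}\cdots x_{a_k}^{r_k}x_{b_l}^{-s_l}\cdots x_{b_2}^{-s_2}x_{b_1}^{-s_1}$ with all $r_i,s_i>0$, $0\le a_1<a_2<\cdots<a_k$ and $0\le b_1<b_2<\cdots<b_l$. This normal form is unique (the "unique normal form") if one additionally requires that whenever both $x_i$ and $x_i^{-1}$ occur, at least one of $x_{i+1}$ or $x_{i+1}^{-1}$ also occurs. The length of a word is the sum of the absolute values of its exponents. *)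

theory Defs
  imports Main
begin

text \<open>Letters x_i^{+1} are (i, True), letters x_i^{-1} are (i, False).
  Words are lists of letters; the length of a word is the sum of absolute values
  of its exponents, i.e. the list length.\<close>

type_synonym letter = "nat \<times> bool"
type_synonym word = "letter list"

definition inv_letter :: "letter \<Rightarrow> letter" where
  "inv_letter x = (fst x, \<not> snd x)"

inductive F_equiv :: "word \<Rightarrow> word \<Rightarrow> bool" where
  refl: "F_equiv u u"
| sym: "F_equiv u v \<Longrightarrow> F_equiv v u"
| trans: "F_equiv u v \<Longrightarrow> F_equiv v w \<Longrightarrow> F_equiv u w"
| cong: "F_equiv u v \<Longrightarrow> F_equiv (a @ u @ b) (a @ v @ b)"
| cancel: "F_equiv [x, inv_letter x] []"
| rel: "i < n \<Longrightarrow> F_equiv [(i, False), (n, True), (i, True)] [(Suc n, True)]"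

text \<open>The word x_{a_1}^{r_1} ... x_{a_k}^{r_k} x_{b_l}^{-s_l} ... x_{b_1}^{-s_1}
  given by ps = [(a_1,r_1),...,(a_k,r_k)] and ns = [(b_1,s_1),...,(b_l,s_l)].\<close>

definition nf_word :: "(nat \<times> nat) list \<Rightarrow> (nat \<times> nat) list \<Rightarrow> word" where
  "nf_word ps ns =
     concat (map (\<lambda>(a, r). replicate r (a, True)) ps) @
     concat (map (\<lambda>(b, s). replicate s (b, False)) (rev ns))"

definition unique_nf :: "(nat \<times> nat) list \<Rightarrow> (nat \<times> nat) list \<Rightarrow> bool" where
  "unique_nf ps ns \<longleftrightarrow>
     sorted_wrt (<) (map fst ps) \<and> sorted_wrt (<) (map fst ns) \<and>
     (\<forall>p \<in> set ps. 0 < snd p) \<and> (\<forall>p \<in> set ns. 0 < snd p) \<and>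
     (\<forall>i. i \<in> fst ` set ps \<and> i \<in> fst ` set ns \<longrightarrow>
          Suc i \<in> fst ` set ps \<or> Suc i \<in> fst ` set ns)"

end

theory Submission
  imports Defs "HOL-Library.Groups_Big_Fun"
begin

(* Thompson's group F acts on the right on the unique normal forms, recorded by their exponent
   vectors: multiplying by x_k^{+1} or x_k^{-1} pushes the new letter leftwards through the
   normal form and changes the sum of the absolute values of the exponents by exactly one.
   Starting from the empty normal form, the word given by a unique normal form ends at its own
   exponent vectors, and so does every word representing the same element, because the action
   respects free cancellation and the defining relations. Hence any such word has at least as
   many letters as the normal form. *)

(* (P, N) stands for x_0^{P 0} x_1^{P 1} ... x_1^{-N 1} x_0^{-N 0}. *)
type_synonym nf = "(nat \<Rightarrow> nat) \<times> (nat \<Rightarrow> nat)"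

definition shift_up :: "nat \<Rightarrow> (nat \<Rightarrow> 'a::zero) \<Rightarrow> nat \<Rightarrow> 'a" where
  "shift_up j f = (\<lambda>i. if i \<le> j then f i else if i = Suc j then 0 else f (i - 1))"

definition shift_down :: "nat \<Rightarrow> (nat \<Rightarrow> 'a) \<Rightarrow> nat \<Rightarrow> 'a" where
  "shift_down j f = (\<lambda>i. if i \<le> j then f i else f (Suc i))"

(* By x_b^{-1} x_m^{+-1} = x_{m+1}^{+-1} x_b^{-1} for b < m, a letter x_k^{+-1} moved leftwards
   through the negative part gains one in index for each x_b^{-1} it passes. It stops at the
   first index m not exceeding any remaining negative index, so m = k + (letters passed). *)
definition push_index :: "nat \<Rightarrow> (nat \<Rightarrow> nat) \<Rightarrow> nat" where
  "push_index k N = (LEAST m. k + (\<Sum>i<m. N i) \<le> m)"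

(* The new x_j either cancels an x_j^{-1} or joins the positive part; in the latter case it has
   to pass the letters of index above j, which raises their indices by one (x_a x_j = x_j x_{a+1}
   and x_b^{-1} x_j = x_j x_{b+1}^{-1} for j < a, b). *)
fun mult_gen :: "nat \<Rightarrow> nf \<Rightarrow> nf" where
  "mult_gen k (P, N) = (let j = push_index k N in
     if 0 < N j then (P, N(j := N j - 1))
     else ((shift_up j P)(j := Suc (P j)), shift_up j N))"

(* In the first branch the new x_j^{-1} would follow x_j with only indices above Suc j in
   between; the reduction x_j u x_j^{-1} = u' (all indices of u lowered by one) restores
   uniqueness. *)
fun mult_gen_inv :: "nat \<Rightarrow> nf \<Rightarrow> nf" where
  "mult_gen_inv k (P, N) = (let j = push_index k N in
     if N j = 0 \<and> 0 < P j \<and> P (Suc j) = 0 \<and> N (Suc j) = 0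
     then (shift_down j (P(j := P j - 1)), shift_down j N)
     else (P, N(j := Suc (N j))))"

declare mult_gen.simps [simp del] mult_gen_inv.simps [simp del]

definition nf_unique :: "(nat \<Rightarrow> nat) \<Rightarrow> (nat \<Rightarrow> nat) \<Rightarrow> bool" where
  "nf_unique P N \<longleftrightarrow> (\<forall>i. 0 < P i \<and> 0 < N i \<longrightarrow> 0 < P (Suc i) \<or> 0 < N (Suc i))"

fun nf_valid :: "nf \<Rightarrow> bool" where
  "nf_valid (P, N) \<longleftrightarrow> finite {i. P i \<noteq> 0} \<and> finite {i. N i \<noteq> 0} \<and> nf_unique P N"

fun nf_length :: "nf \<Rightarrow> nat" where
  "nf_length (P, N) = Sum_any P + Sum_any N"

lemma sum_shift_up_low: "m \<le> Suc j \<Longrightarrow> (\<Sum>i<m. shift_up j f i) = (\<Sum>i<m. f i)"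
  by (rule sum.cong) (auto simp: shift_up_def)

lemma sum_shift_up: "j < m \<Longrightarrow> (\<Sum>i<Suc m. shift_up j f i) = (\<Sum>i<m. f i)"
proof (induction m)
  case (Suc m)
  then show ?case
    using sum_shift_up_low[of "Suc j" j f] by (cases "j = m") (auto simp: shift_up_def)
qed simp

lemma shift_down_shift_up [simp]: "shift_down j (shift_up j f) = f"
  by (auto simp: shift_down_def shift_up_def)

lemma shift_up_shift_down: "f (Suc j) = 0 \<Longrightarrow> shift_up j (shift_down j f) = f"
  unfolding shift_down_def shift_up_def by (rule ext) (auto simp: not_le)

lemma shift_up_apply_le [simp]: "i \<le> j \<Longrightarrow> shift_up j f i = f i"
  by (simp add: shift_up_def)

lemma shift_up_apply_Suc_self [simp]: "shift_up j f (Suc j) = 0"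
  by (simp add: shift_up_def)

lemma shift_up_apply_Suc [simp]: "j < i \<Longrightarrow> shift_up j f (Suc i) = f i"
  by (simp add: shift_up_def)

lemma shift_up_fun_upd_le [simp]: "i \<le> j \<Longrightarrow> shift_up j (f(i := x)) = (shift_up j f)(i := x)"
  unfolding shift_up_def by (rule ext) auto

lemma shift_up_fun_upd_greater: "j < i \<Longrightarrow> shift_up j (f(i := x)) = (shift_up j f)(Suc i := x)"
  unfolding shift_up_def by (rule ext) auto

lemma shift_down_fun_upd_le: "i \<le> j \<Longrightarrow> shift_down j (f(i := x)) = (shift_down j f)(i := x)"
  unfolding shift_down_def by (rule ext) auto

lemma shift_up_shift_up: "i \<le> j \<Longrightarrow> shift_up i (shift_up j f) = shift_up (Suc j) (shift_up i f)"
  unfolding shift_up_def by (rule ext) auto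

lemma finite_support_shift_up:
  assumes "finite {i. f i \<noteq> 0}" shows "finite {i. shift_up j f i \<noteq> 0}"
proof (rule finite_subset)
  show "{i. shift_up j f i \<noteq> 0} \<subseteq> {..j} \<union> Suc ` {i. f i \<noteq> 0}"
  proof
    fix i assume "i \<in> {i. shift_up j f i \<noteq> 0}"
    then show "i \<in> {..j} \<union> Suc ` {i. f i \<noteq> 0}"
      by (cases "i \<le> j")
        (auto simp: shift_up_def image_iff intro!: bexI[of _ "i - 1"] split: if_splits)
  qed
qed (use assms in simp)

lemma finite_support_shift_down:
  assumes "finite {i. f i \<noteq> 0}" shows "finite {i. shift_down j f i \<noteq> 0}"
proof (rule finite_subset)
  show "{i. shift_down j f i \<noteq> 0} \<subseteq> {..j} \<union> (\<lambda>i. i - 1) ` {i. f i \<noteq> 0}"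
  proof
    fix i assume "i \<in> {i. shift_down j f i \<noteq> 0}"
    then show "i \<in> {..j} \<union> (\<lambda>i. i - 1) ` {i. f i \<noteq> 0}"
      by (cases "i \<le> j") (auto simp: shift_down_def image_iff intro!: bexI[of _ "Suc i"])
  qed
qed (use assms in simp)

lemma finite_support_fun_upd:
  assumes "finite {i. f i \<noteq> 0}" shows "finite {i. (f(j := x)) i \<noteq> 0}"
  by (rule finite_subset[of _ "insert j {i. f i \<noteq> 0}"]) (use assms in auto)

lemma finite_support_bounded:
  fixes f :: "nat \<Rightarrow> 'a::zero"
  assumes "finite {i. f i \<noteq> 0}" obtains B where "\<forall>i\<ge>B. f i = 0"
proof -
  obtain B where "\<forall>i\<in>{i. f i \<noteq> 0}. i < B"
    using assms finite_nat_set_iff_bounded by blast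
  then have "\<forall>i\<ge>B. f i = 0" by (auto simp: not_less[symmetric])
  then show ?thesis by (rule that)
qed

lemma Sum_any_lessThan:
  fixes f :: "nat \<Rightarrow> 'a::comm_monoid_add"
  assumes "\<forall>i\<ge>B. f i = 0" and "B \<le> m"
  shows "Sum_any f = (\<Sum>i<m. f i)"
  using assms by (intro Sum_any.expand_superset) (auto, meson le_trans not_le)

lemma sum_fun_upd:
  fixes f :: "'a \<Rightarrow> 'b::comm_monoid_add"
  assumes "finite A" and "j \<in> A"
  shows "sum (f(j := x)) A + f j = sum f A + x"
proof -
  have "sum (f(j := x)) A = (f(j := x)) j + sum (f(j := x)) (A - {j})"
    by (rule sum.remove[OF assms])
  also have "sum (f(j := x)) (A - {j}) = sum f (A - {j})"
    by (rule sum.cong) auto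
  finally have upd: "sum (f(j := x)) A = x + sum f (A - {j})" by simp
  have "sum f A = f j + sum f (A - {j})"
    using sum.remove[OF assms] .
  with upd show ?thesis
    by (simp only: ac_simps)
qed

lemma Sum_any_fun_upd:
  fixes f :: "'a \<Rightarrow> 'b::comm_monoid_add"
  assumes "finite {i. f i \<noteq> 0}"
  shows "Sum_any (f(j := x)) + f j = Sum_any f + x"
proof -
  let ?A = "insert j {i. f i \<noteq> 0}"
  have "Sum_any (f(j := x)) = sum (f(j := x)) ?A"
    by (rule Sum_any.expand_superset) (use assms in auto)
  moreover have "Sum_any f = sum f ?A"
    by (rule Sum_any.expand_superset) (use assms in auto)
  ultimately show ?thesis
    using sum_fun_upd[of ?A j f x] assms by simp
qed

lemma Sum_any_shift_up:
  assumes "finite {i. f i \<noteq> 0}" shows "Sum_any (shift_up j f) = Sum_any f"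
proof -
  obtain B where B: "\<forall>i\<ge>B. f i = 0"
    using finite_support_bounded[OF assms] .
  define m where "m = max B (Suc j)"
  have "Sum_any (shift_up j f) = (\<Sum>i<Suc m. shift_up j f i)"
    by (rule Sum_any_lessThan[of "Suc m"]) (use B in \<open>auto simp: shift_up_def m_def\<close>)
  also have "\<dots> = (\<Sum>i<m. f i)"
    by (rule sum_shift_up) (simp add: m_def)
  also have "\<dots> = Sum_any f"
    by (rule Sum_any_lessThan[symmetric]) (use B in \<open>auto simp: m_def\<close>)
  finally show ?thesis .
qed

lemma Sum_any_shift_down:
  assumes "finite {i. f i \<noteq> 0}" and "f (Suc j) = 0"
  shows "Sum_any (shift_down j f) = Sum_any f"
  using Sum_any_shift_up[of "shift_down j f" j] finite_support_shift_down[OF assms(1)]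
  by (simp add: shift_up_shift_down[of f j, OF assms(2)])

lemma push_index_eqI:
  assumes "k + (\<Sum>i<j. N i) \<le> j" and "\<And>m. m < j \<Longrightarrow> m < k + (\<Sum>i<m. N i)"
  shows "push_index k N = j"
  unfolding push_index_def
proof (rule Least_equality)
  show "j \<le> m" if "k + (\<Sum>i<m. N i) \<le> m" for m
    using assms(2) that by (meson not_le)
qed (fact assms(1))

lemma less_push_index: "m < push_index k N \<Longrightarrow> m < k + (\<Sum>i<m. N i)"
  unfolding push_index_def by (meson not_less_Least not_le)

lemma push_index_fixpoint:
  assumes "finite {i. N i \<noteq> 0}"
  shows "k + (\<Sum>i<push_index k N. N i) = push_index k N"
proof -
  obtain B where B: "\<forall>i\<ge>B. N i = 0"
    using finite_support_bounded[OF assms] .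
  have "k + (\<Sum>i<B + k + Sum_any N. N i) \<le> B + k + Sum_any N"
    using Sum_any_lessThan[OF B, of "B + k + Sum_any N"] by simp
  then have le: "k + (\<Sum>i<push_index k N. N i) \<le> push_index k N"
    unfolding push_index_def by (rule LeastI)
  show ?thesis
  proof (cases "push_index k N")
    case (Suc m)
    then have "m < k + (\<Sum>i<m. N i)"
      using less_push_index[of m k N] by simp
    then show ?thesis using le Suc by simp
  qed (use le in simp)
qed

lemma push_index_pred:
  assumes "finite {i. N i \<noteq> 0}" and "0 < push_index k N"
  shows "N (push_index k N - 1) = 0"
proof -
  obtain m where m: "push_index k N = Suc m"
    using assms(2) gr0_implies_Suc by blast
  have "m < k + (\<Sum>i<m. N i)"
    using less_push_index[of m k N] m by simp
  moreover have "k + (\<Sum>i<Suc m. N i) = Suc m"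
    using push_index_fixpoint[OF assms(1), of k] m by simp
  ultimately show ?thesis using m by simp
qed

lemma push_index_cong:
  assumes "finite {i. N i \<noteq> 0}" and "\<And>i. i < push_index k N \<Longrightarrow> N' i = N i"
  shows "push_index k N' = push_index k N"
proof (rule push_index_eqI)
  have "(\<Sum>i<push_index k N. N' i) = (\<Sum>i<push_index k N. N i)"
    by (rule sum.cong) (use assms(2) in auto)
  then show "k + (\<Sum>i<push_index k N. N' i) \<le> push_index k N"
    using push_index_fixpoint[OF assms(1), of k] by simp
next
  fix m assume m: "m < push_index k N"
  have "(\<Sum>i<m. N' i) = (\<Sum>i<m. N i)"
    by (rule sum.cong) (use assms(2) m in auto)
  then show "m < k + (\<Sum>i<m. N' i)"
    using less_push_index[OF m] by simp
qed

lemma push_index_self: "\<forall>i<k. N i = 0 \<Longrightarrow> push_index k N = k"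
  by (rule push_index_eqI) auto

lemma push_index_strict_mono:
  assumes "finite {i. N i \<noteq> 0}" and "i < n"
  shows "push_index i N < push_index n N"
proof -
  have a: "i + (\<Sum>l<push_index i N. N l) = push_index i N"
    and b: "n + (\<Sum>l<push_index n N. N l) = push_index n N"
    using push_index_fixpoint[OF assms(1)] by auto
  have "\<not> push_index n N < push_index i N"
    using less_push_index[of "push_index n N" i N] b assms(2) by linarith
  moreover have "push_index i N \<noteq> push_index n N"
    using a b assms(2) by fastforce
  ultimately show ?thesis by simp
qed

lemma push_index_Suc_fun_upd:
  assumes "finite {i. N i \<noteq> 0}" and "0 < N a" and "a < push_index n N"
  shows "push_index (Suc n) (N(a := N a - 1)) = push_index n N"
proof (rule push_index_eqI)
  have "(\<Sum>i<push_index n N. (N(a := N a - 1)) i) + 1 = (\<Sum>i<push_index n N. N i)"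
    using sum_fun_upd[of "{..<push_index n N}" a N "N a - 1"] assms(2,3) by simp
  then show "Suc n + (\<Sum>i<push_index n N. (N(a := N a - 1)) i) \<le> push_index n N"
    using push_index_fixpoint[OF assms(1), of n] by simp
next
  fix m assume m: "m < push_index n N"
  have "(\<Sum>i<m. (N(a := N a - 1)) i) + (if a < m then 1 else 0) = (\<Sum>i<m. N i)"
  proof (cases "a < m")
    case True
    then show ?thesis using sum_fun_upd[of "{..<m}" a N "N a - 1"] assms(2) by simp
  qed (auto intro: sum.cong)
  then show "m < Suc n + (\<Sum>i<m. (N(a := N a - 1)) i)"
    using less_push_index[OF m] by (simp split: if_splits)
qed

lemma push_index_Suc_shift_up:
  assumes "finite {i. N i \<noteq> 0}" and "a < push_index n N"
  shows "push_index (Suc n) (shift_up a N) = Suc (push_index n N)"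
proof (rule push_index_eqI)
  show "Suc n + (\<Sum>i<Suc (push_index n N). shift_up a N i) \<le> Suc (push_index n N)"
    using sum_shift_up[OF assms(2), of N] push_index_fixpoint[OF assms(1), of n] by simp
next
  fix m assume m: "m < Suc (push_index n N)"
  show "m < Suc n + (\<Sum>i<m. shift_up a N i)"
  proof (cases "m \<le> Suc a")
    case True
    have "m \<le> n + (\<Sum>i<m. N i)"
      using less_push_index[of m n N] push_index_fixpoint[OF assms(1), of n] m
      by (cases "m = push_index n N") auto
    then show ?thesis using sum_shift_up_low[OF True, of N] by simp
  next
    case False
    then obtain m' where "m = Suc m'" and "a < m'" by (cases m) auto
    then show ?thesis
      using sum_shift_up[of a m' N] less_push_index[of m' n N] m by simp
  qed
qed

lemma mult_gen_relation:
  assumes "finite {l. N l \<noteq> 0}" and "i < n"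
  shows "mult_gen i (mult_gen n (P, N)) = mult_gen (Suc n) (mult_gen i (P, N))"
proof -
  define a b where "a = push_index i N" and "b = push_index n N"
  have "a < b"
    using push_index_strict_mono[OF assms] by (simp add: a_def b_def)
  have a_upd: "push_index i (N(b := x)) = a" for x
    unfolding a_def
    by (rule push_index_cong[OF assms(1)]) (use \<open>a < b\<close> in \<open>auto simp: a_def\<close>)
  have a_shift: "push_index i (shift_up b N) = a"
    unfolding a_def
    by (rule push_index_cong[OF assms(1)]) (use \<open>a < b\<close> in \<open>auto simp: a_def\<close>)
  have b_upd: "push_index (Suc n) (N(a := N a - 1)) = b" if "0 < N a"
    unfolding b_def
    by (rule push_index_Suc_fun_upd[OF assms(1) that]) (use \<open>a < b\<close> in \<open>simp add: b_def\<close>)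
  have b_shift: "push_index (Suc n) (shift_up a N) = Suc b"
    unfolding b_def
    by (rule push_index_Suc_shift_up[OF assms(1)]) (use \<open>a < b\<close> in \<open>simp add: b_def\<close>)
  show ?thesis
    using \<open>a < b\<close> b_upd
    by (cases "0 < N a"; cases "0 < N b")
      (simp_all add: mult_gen.simps Let_def a_def[symmetric] b_def[symmetric] a_upd a_shift b_shift
        shift_up_fun_upd_greater shift_up_shift_up fun_upd_twist)
qed

lemma mult_gen_inv_mult_gen:
  assumes "nf_valid (P, N)"
  shows "mult_gen_inv k (mult_gen k (P, N)) = (P, N)"
proof -
  define j where "j = push_index k N"
  have fin: "finite {i. N i \<noteq> 0}" and uniq: "nf_unique P N"
    using assms by auto
  show ?thesis
  proof (cases "0 < N j")
    case True
    have "push_index k (N(j := x)) = j" for x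
      unfolding j_def by (rule push_index_cong[OF fin]) (auto simp: j_def)
    moreover have "\<not> (0 < P j \<and> P (Suc j) = 0 \<and> N (Suc j) = 0)"
      using uniq True by (auto simp: nf_unique_def)
    ultimately show ?thesis
      using True by (auto simp: mult_gen.simps mult_gen_inv.simps Let_def j_def[symmetric])
  next
    case False
    have "push_index k (shift_up j N) = j"
      unfolding j_def by (rule push_index_cong[OF fin]) (auto simp: j_def)
    then show ?thesis
      using False
      by (simp add: mult_gen.simps mult_gen_inv.simps Let_def j_def[symmetric] shift_down_fun_upd_le)
  qed
qed

lemma mult_gen_mult_gen_inv:
  assumes "finite {i. N i \<noteq> 0}"
  shows "mult_gen k (mult_gen_inv k (P, N)) = (P, N)"
proof -
  define j where "j = push_index k N"
  show ?thesis
  proof (cases "N j = 0 \<and> 0 < P j \<and> P (Suc j) = 0 \<and> N (Suc j) = 0")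
    case True
    have "push_index k (shift_down j N) = j"
      unfolding j_def by (rule push_index_cong[OF assms]) (auto simp: j_def shift_down_def)
    then show ?thesis
      using True
      by (simp add: mult_gen.simps mult_gen_inv.simps Let_def j_def[symmetric] shift_up_shift_down)
        (simp add: shift_down_def)
  next
    case False
    have "push_index k (N(j := x)) = j" for x
      unfolding j_def by (rule push_index_cong[OF assms]) (auto simp: j_def)
    then show ?thesis
      using False by (auto simp: mult_gen.simps mult_gen_inv.simps Let_def j_def[symmetric])
  qed
qed

lemma nf_unique_cancel:
  assumes "nf_unique P N" and "0 < j \<Longrightarrow> N (j - 1) = 0"
  shows "nf_unique P (N(j := N j - 1))"
  using assms unfolding nf_unique_def by auto

lemma nf_unique_insert:
  assumes "nf_unique P N" and "N j = 0"
  shows "nf_unique ((shift_up j P)(j := Suc (P j))) (shift_up j N)"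
  using assms unfolding nf_unique_def shift_up_def by auto

lemma nf_unique_delete:
  assumes "nf_unique P N" and "0 < j \<Longrightarrow> N (j - 1) = 0" and "N j = 0"
  shows "nf_unique (shift_down j (P(j := P j - 1))) (shift_down j N)"
  using assms unfolding nf_unique_def shift_down_def by (auto simp: not_less_eq_eq dest: le_antisym)

lemma nf_unique_add_inv:
  assumes "nf_unique P N" and "\<not> (N j = 0 \<and> 0 < P j \<and> P (Suc j) = 0 \<and> N (Suc j) = 0)"
  shows "nf_unique P (N(j := Suc (N j)))"
  using assms unfolding nf_unique_def by auto

lemma nf_unique_fun_upd_below:
  assumes "nf_unique P (N(b := s))" and "\<forall>i\<le>b. N i = 0"
  shows "nf_unique P N"
  unfolding nf_unique_def
proof (intro allI impI)
  fix i assume i: "0 < P i \<and> 0 < N i"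
  then have "b < i"
    using assms(2) by (cases "b < i") auto
  then show "0 < P (Suc i) \<or> 0 < N (Suc i)"
    using assms(1)[unfolded nf_unique_def, THEN spec[of _ i]] i by simp
qed

lemma nf_valid_mult_gen:
  assumes "nf_valid (P, N)" shows "nf_valid (mult_gen k (P, N))"
proof -
  define j where "j = push_index k N"
  have fin: "finite {i. P i \<noteq> 0}" "finite {i. N i \<noteq> 0}" and uniq: "nf_unique P N"
    using assms by auto
  have pred: "0 < j \<Longrightarrow> N (j - 1) = 0"
    using push_index_pred[OF fin(2)] by (simp add: j_def)
  show ?thesis
  proof (cases "0 < N j")
    case True
    then show ?thesis
      using fin finite_support_fun_upd[OF fin(2), of j] nf_unique_cancel[OF uniq pred]
      by (simp add: mult_gen.simps Let_def j_def[symmetric])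
  next
    case False
    then show ?thesis
      using finite_support_fun_upd[OF finite_support_shift_up[OF fin(1)], of j j]
        finite_support_shift_up[OF fin(2), of j] nf_unique_insert[OF uniq, of j]
      by (simp add: mult_gen.simps Let_def j_def[symmetric])
  qed
qed

lemma nf_valid_mult_gen_inv:
  assumes "nf_valid (P, N)" shows "nf_valid (mult_gen_inv k (P, N))"
proof -
  define j where "j = push_index k N"
  have fin: "finite {i. P i \<noteq> 0}" "finite {i. N i \<noteq> 0}" and uniq: "nf_unique P N"
    using assms by auto
  have pred: "0 < j \<Longrightarrow> N (j - 1) = 0"
    using push_index_pred[OF fin(2)] by (simp add: j_def)
  show ?thesis
  proof (cases "N j = 0 \<and> 0 < P j \<and> P (Suc j) = 0 \<and> N (Suc j) = 0")
    case True
    have "finite {i. (P(j := P j - 1)) i \<noteq> 0}"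
      by (rule finite_support_fun_upd[OF fin(1)])
    then have "finite {i. shift_down j (P(j := P j - 1)) i \<noteq> 0}"
      by (rule finite_support_shift_down)
    then show ?thesis
      using True finite_support_shift_down[OF fin(2), of j] nf_unique_delete[OF uniq pred]
      by (simp add: mult_gen_inv.simps Let_def j_def[symmetric])
  next
    case False
    then show ?thesis
      using fin finite_support_fun_upd[OF fin(2), of j] nf_unique_add_inv[OF uniq, of j]
      by (auto simp: mult_gen_inv.simps Let_def j_def[symmetric])
  qed
qed

fun mult_letter :: "nf \<Rightarrow> letter \<Rightarrow> nf" where
  "mult_letter g (k, True) = mult_gen k g"
| "mult_letter g (k, False) = mult_gen_inv k g"

lemma nf_valid_mult_letter: "nf_valid g \<Longrightarrow> nf_valid (mult_letter g x)"
  by (cases g; cases x; cases "snd x") (auto simp: nf_valid_mult_gen nf_valid_mult_gen_inv)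

lemma nf_valid_foldl_mult_letter: "nf_valid g \<Longrightarrow> nf_valid (foldl mult_letter g w)"
  by (induction w arbitrary: g) (simp_all add: nf_valid_mult_letter)

lemma foldl_mult_letter_F_equiv:
  assumes "F_equiv u v" and "nf_valid g"
  shows "foldl mult_letter g u = foldl mult_letter g v"
  using assms
proof (induction arbitrary: g rule: F_equiv.induct)
  case (cong u v a b)
  then show ?case using nf_valid_foldl_mult_letter by simp
next
  case (cancel x)
  obtain P N where g: "g = (P, N)" by fastforce
  obtain k s where x: "x = (k, s)" by fastforce
  show ?case
    using cancel g mult_gen_inv_mult_gen[of P N] mult_gen_mult_gen_inv[of N k P]
    by (cases s) (auto simp: x inv_letter_def)
next
  case (rel i n)
  obtain P0 N0 where g: "g = (P0, N0)" by fastforce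
  obtain P N where h: "mult_gen_inv i (P0, N0) = (P, N)" by fastforce
  have valid: "nf_valid (P, N)"
    using nf_valid_mult_gen_inv[of P0 N0 i] rel.prems g h by simp
  have g_eq: "g = mult_gen i (P, N)"
    using mult_gen_mult_gen_inv[of N0 i P0] rel.prems g h by simp
  have "foldl mult_letter g [(i, False), (n, True), (i, True)] = mult_gen i (mult_gen n (P, N))"
    using g h by simp
  also have "\<dots> = mult_gen (Suc n) (mult_gen i (P, N))"
    using valid rel.hyps by (simp add: mult_gen_relation)
  also have "\<dots> = foldl mult_letter g [(Suc n, True)]"
    using g_eq by simp
  finally show ?case .
qed auto

lemma nf_length_mult_gen:
  assumes "finite {i. P i \<noteq> 0}" and "finite {i. N i \<noteq> 0}"
  shows "nf_length (mult_gen k (P, N)) \<le> Suc (nf_length (P, N))"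
proof -
  define j where "j = push_index k N"
  show ?thesis
  proof (cases "0 < N j")
    case True
    then show ?thesis
      using Sum_any_fun_upd[OF assms(2), of j "N j - 1"]
      by (simp add: mult_gen.simps Let_def j_def[symmetric])
  next
    case False
    then show ?thesis
      using Sum_any_fun_upd[OF finite_support_shift_up[OF assms(1)], of j j "Suc (P j)"]
        Sum_any_shift_up[OF assms(1), of j] Sum_any_shift_up[OF assms(2), of j]
      by (simp add: mult_gen.simps Let_def j_def[symmetric])
  qed
qed

lemma nf_length_mult_gen_inv:
  assumes "finite {i. P i \<noteq> 0}" and "finite {i. N i \<noteq> 0}"
  shows "nf_length (mult_gen_inv k (P, N)) \<le> Suc (nf_length (P, N))"
proof -
  define j where "j = push_index k N"
  show ?thesis
  proof (cases "N j = 0 \<and> 0 < P j \<and> P (Suc j) = 0 \<and> N (Suc j) = 0")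
    case True
    have "Sum_any (shift_down j (P(j := P j - 1))) = Sum_any (P(j := P j - 1))"
      by (rule Sum_any_shift_down[OF finite_support_fun_upd[OF assms(1)]]) (use True in simp)
    then show ?thesis
      using True Sum_any_fun_upd[OF assms(1), of j "P j - 1"] Sum_any_shift_down[OF assms(2), of j]
      by (simp add: mult_gen_inv.simps Let_def j_def[symmetric])
  next
    case False
    then show ?thesis
      using Sum_any_fun_upd[OF assms(2), of j "Suc (N j)"]
      by (auto simp: mult_gen_inv.simps Let_def j_def[symmetric])
  qed
qed

lemma nf_length_foldl_mult_letter:
  "nf_valid g \<Longrightarrow> nf_length (foldl mult_letter g w) \<le> nf_length g + length w"
proof (induction w arbitrary: g)
  case (Cons x w)
  have "nf_length (mult_letter g x) \<le> Suc (nf_length g)"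
    using Cons.prems nf_length_mult_gen nf_length_mult_gen_inv
    by (cases g; cases x; cases "snd x") auto
  moreover have
    "nf_length (foldl mult_letter (mult_letter g x) w) \<le> nf_length (mult_letter g x) + length w"
    by (rule Cons.IH) (rule nf_valid_mult_letter[OF Cons.prems])
  ultimately show ?case by simp
qed simp

fun exponents :: "(nat \<times> nat) list \<Rightarrow> nat \<Rightarrow> nat" where
  "exponents [] = (\<lambda>_. 0)"
| "exponents ((a, r) # xs) = (exponents xs)(a := exponents xs a + r)"

lemma exponents_eq_0: "i \<notin> fst ` set xs \<Longrightarrow> exponents xs i = 0"
  by (induction xs rule: exponents.induct) simp_all

lemma exponents_eq_0_below:
  assumes "\<forall>q\<in>set xs. b < fst q" and "i \<le> b"
  shows "exponents xs i = 0"
proof (rule exponents_eq_0)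
  show "i \<notin> fst ` set xs"
  proof
    assume "i \<in> fst ` set xs"
    then obtain q where "q \<in> set xs" and "i = fst q" by blast
    then show False using assms by auto
  qed
qed

lemma exponents_pos: "\<forall>p\<in>set xs. 0 < snd p \<Longrightarrow> i \<in> fst ` set xs \<Longrightarrow> 0 < exponents xs i"
  by (induction xs rule: exponents.induct) auto

lemma exponents_pos_iff:
  assumes "\<forall>p\<in>set xs. 0 < snd p"
  shows "0 < exponents xs i \<longleftrightarrow> i \<in> fst ` set xs"
proof
  show "0 < exponents xs i \<Longrightarrow> i \<in> fst ` set xs"
    using exponents_eq_0[of i xs] by auto
  show "i \<in> fst ` set xs \<Longrightarrow> 0 < exponents xs i"
    by (rule exponents_pos[OF assms])
qed

lemma finite_support_exponents: "finite {i. exponents xs i \<noteq> 0}"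
proof (rule finite_subset)
  show "{i. exponents xs i \<noteq> 0} \<subseteq> fst ` set xs"
  proof
    fix i assume "i \<in> {i. exponents xs i \<noteq> 0}"
    then show "i \<in> fst ` set xs"
      using exponents_eq_0[of i xs] by auto
  qed
qed simp

lemma Sum_any_exponents: "Sum_any (exponents xs) = (\<Sum>p\<leftarrow>xs. snd p)"
proof (induction xs rule: exponents.induct)
  case (2 a r xs)
  then show ?case
    using Sum_any_fun_upd[OF finite_support_exponents, of xs a "exponents xs a + r"] by simp
qed simp

lemma foldl_mult_letter_replicate_gen:
  assumes "\<forall>i>a. P i = 0"
  shows "foldl mult_letter (P, \<lambda>_. 0) (replicate r (a, True)) = (P(a := P a + r), \<lambda>_. 0)"
  using assms
proof (induction r arbitrary: P)
  case (Suc r)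
  have "shift_up a P = P" and "shift_up a (\<lambda>_. 0) = (\<lambda>_. 0)"
    using Suc.prems by (auto simp: shift_up_def)
  then have "mult_gen a (P, \<lambda>_. 0) = (P(a := Suc (P a)), \<lambda>_. 0)"
    by (simp add: mult_gen.simps push_index_self)
  then have "foldl mult_letter (P, \<lambda>_. 0) (replicate (Suc r) (a, True))
      = foldl mult_letter (P(a := Suc (P a)), \<lambda>_. 0) (replicate r (a, True))"
    by simp
  also have "\<dots> = ((P(a := Suc (P a)))(a := (P(a := Suc (P a))) a + r), \<lambda>_. 0)"
    by (rule Suc.IH) (use Suc.prems in simp)
  also have "\<dots> = (P(a := P a + Suc r), \<lambda>_. 0)"
    by simp
  finally show ?case .
qed simp

lemma foldl_mult_letter_replicate_gen_inv:
  assumes "\<forall>i<b. N i = 0" and "0 < P b \<longrightarrow> 0 < N b \<or> 0 < P (Suc b) \<or> 0 < N (Suc b)"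
  shows "foldl mult_letter (P, N) (replicate s (b, False)) = (P, N(b := N b + s))"
  using assms
proof (induction s arbitrary: N)
  case (Suc s)
  have "mult_gen_inv b (P, N) = (P, N(b := Suc (N b)))"
    using Suc.prems by (auto simp: mult_gen_inv.simps push_index_self)
  then have "foldl mult_letter (P, N) (replicate (Suc s) (b, False))
      = foldl mult_letter (P, N(b := Suc (N b))) (replicate s (b, False))"
    by simp
  also have "\<dots> = (P, (N(b := Suc (N b)))(b := (N(b := Suc (N b))) b + s))"
    by (rule Suc.IH) (use Suc.prems(1) in simp_all)
  also have "\<dots> = (P, N(b := N b + Suc s))"
    by simp
  finally show ?case .
qed simp

lemma foldl_mult_letter_positive_part:
  assumes "sorted_wrt (<) (map fst ps)" and "\<forall>p\<in>set ps. \<forall>i>fst p. P i = 0"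
  shows "foldl mult_letter (P, \<lambda>_. 0) (concat (map (\<lambda>(a, r). replicate r (a, True)) ps))
    = (\<lambda>i. P i + exponents ps i, \<lambda>_. 0)"
  using assms
proof (induction ps arbitrary: P rule: exponents.induct)
  case (2 a r ps)
  have "foldl mult_letter (P, \<lambda>_. 0) (concat (map (\<lambda>(a, r). replicate r (a, True)) ((a, r) # ps)))
      = foldl mult_letter (P(a := P a + r), \<lambda>_. 0)
          (concat (map (\<lambda>(a, r). replicate r (a, True)) ps))"
    using "2.prems"(2) by (simp add: foldl_mult_letter_replicate_gen)
  also have "\<dots> = (\<lambda>i. (P(a := P a + r)) i + exponents ps i, \<lambda>_. 0)"
    by (rule "2.IH") (use "2.prems" in auto)
  also have "\<dots> = (\<lambda>i. P i + exponents ((a, r) # ps) i, \<lambda>_. 0)"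
    by auto
  finally show ?case .
qed simp

lemma foldl_mult_letter_negative_part:
  assumes "sorted_wrt (<) (map fst ns)" and "\<forall>p\<in>set ns. 0 < snd p"
    and "nf_unique P (exponents ns)"
  shows "foldl mult_letter (P, \<lambda>_. 0) (concat (map (\<lambda>(b, s). replicate s (b, False)) (rev ns)))
    = (P, exponents ns)"
  using assms
proof (induction ns rule: exponents.induct)
  case (2 b s ns)
  have below: "\<forall>i\<le>b. exponents ns i = 0"
    using "2.prems"(1) exponents_eq_0_below[of ns b] by simp
  then have "exponents ((b, s) # ns) = (exponents ns)(b := s)"
    by simp
  then have uniq: "nf_unique P ((exponents ns)(b := s))"
    using "2.prems"(3) by (simp only:)
  have IH: "foldl mult_letter (P, \<lambda>_. 0)
      (concat (map (\<lambda>(b, s). replicate s (b, False)) (rev ns))) = (P, exponents ns)"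
    using "2.prems"(1,2) nf_unique_fun_upd_below[OF uniq below] by (intro "2.IH") simp_all
  have "\<forall>i<b. exponents ns i = 0"
    using below by simp
  moreover have "0 < P b \<longrightarrow> 0 < exponents ns b \<or> 0 < P (Suc b) \<or> 0 < exponents ns (Suc b)"
    using uniq[unfolded nf_unique_def, THEN spec[of _ b]] "2.prems"(2) by simp
  ultimately have block: "foldl mult_letter (P, exponents ns) (replicate s (b, False))
      = (P, exponents ((b, s) # ns))"
    unfolding exponents.simps by (rule foldl_mult_letter_replicate_gen_inv)
  have "concat (map (\<lambda>(b, s). replicate s (b, False)) (rev ((b, s) # ns)))
      = concat (map (\<lambda>(b, s). replicate s (b, False)) (rev ns)) @ replicate s (b, False)"
    by simp
  then show ?case
    by (simp only: foldl_append IH block)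
qed simp

lemma foldl_mult_letter_nf_word:
  assumes "unique_nf ps ns"
  shows "foldl mult_letter (\<lambda>_. 0, \<lambda>_. 0) (nf_word ps ns) = (exponents ps, exponents ns)"
proof -
  have ps: "sorted_wrt (<) (map fst ps)" "\<forall>p\<in>set ps. 0 < snd p"
    and ns: "sorted_wrt (<) (map fst ns)" "\<forall>p\<in>set ns. 0 < snd p"
    using assms by (auto simp: unique_nf_def)
  have "nf_unique (exponents ps) (exponents ns)"
    using assms
    by (simp add: unique_nf_def nf_unique_def exponents_pos_iff[OF ps(2)] exponents_pos_iff[OF ns(2)])
  then have "foldl mult_letter (exponents ps, \<lambda>_. 0)
      (concat (map (\<lambda>(b, s). replicate s (b, False)) (rev ns))) = (exponents ps, exponents ns)"
    using ns by (simp add: foldl_mult_letter_negative_part)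
  moreover have "foldl mult_letter (\<lambda>_. 0, \<lambda>_. 0)
      (concat (map (\<lambda>(a, r). replicate r (a, True)) ps)) = (exponents ps, \<lambda>_. 0)"
    using foldl_mult_letter_positive_part[OF ps(1), of "\<lambda>_. 0"] by simp
  ultimately show ?thesis
    by (simp add: nf_word_def)
qed

lemma length_concat_replicate:
  "length (concat (map (\<lambda>(a, r). replicate r (a, c)) xs)) = (\<Sum>p\<leftarrow>xs. snd p)"
  by (induction xs) auto

lemma nf_length_exponents: "nf_length (exponents ps, exponents ns) = length (nf_word ps ns)"
  by (simp add: Sum_any_exponents nf_word_def length_concat_replicate sum_list_rev flip: rev_map)

theorem lemma2p1:
  fixes ps ns :: "(nat \<times> nat) list" and v :: word
  assumes "unique_nf ps ns"
    and "F_equiv (nf_word ps ns) v"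
  shows "length (nf_word ps ns) \<le> length v"
proof -
  let ?e = "(\<lambda>_. 0, \<lambda>_. 0) :: nf"
  have valid: "nf_valid ?e"
    by (simp add: nf_unique_def)
  have "foldl mult_letter ?e v = (exponents ps, exponents ns)"
    using foldl_mult_letter_F_equiv[OF assms(2) valid] foldl_mult_letter_nf_word[OF assms(1)]
    by simp
  then have "nf_length (exponents ps, exponents ns) \<le> length v"
    using nf_length_foldl_mult_letter[OF valid, of v] by simp
  then show ?thesis
    by (simp only: nf_length_exponents)
qed

end
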